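(* Let $\alpha=(x,u')$ and $\beta=(y,v')$ be distinct non-collinear points of $\mathcal{S}$ such that either ($x=y$ and $u'\neq v'$) or ($x\neq y$ and $u'=v'$). Then $|\{\alpha,\beta\}^{\perp}|\geq 2$ in $\mathcal{S}$.
   Context: Let $S=(P,L)$ and $S'=(P',L')$ be generalized quadrangles of order $(2,2)$ (every line has 3 points, every point lies on 3 lines, and for each point $x$ and line $l\not\ni x$ exactly one point of $l$ is collinear with $x$), with an isomorphism $x\mapsto x'$ from $S$ to $S'$. In a point-line geometry, $x^{\perp}$ is $x$ together with all points collinear with $x$, and $A^{\perp}=\bigcap_{a\in A}a^{\perp}$. A triad is a set of three pairwise non-collinear points, complete if $|T^{\perp}|=3$. The geometry $\mathcal{S}=(\mathcal{P},\mathcal{L})$ has point set $\mathcal{P}=\{(x,y')\in P\times P':y'\in x'^{\perp}\}$ and lines all $3$-subsets $\{(x,u'),(y,v'),(z,w')\}$ of $\mathcal{P}$ where $T=\{x,y,z\}$ (three distinct points) is a line or a complete triad of $S$ and $\{u',v',w'\}=T'^{\perp}$ in $S'$ with $u',v',w'$ distinct. *)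

theory Defs
  imports Main
begin

definition collinear :: "'a set set \<Rightarrow> 'a \<Rightarrow> 'a \<Rightarrow> bool" where
  "collinear L x y \<longleftrightarrow> (\<exists>l\<in>L. x \<in> l \<and> y \<in> l)"

definition perp :: "'a set \<Rightarrow> 'a set set \<Rightarrow> 'a \<Rightarrow> 'a set" where
  "perp P L x = insert x {y \<in> P. collinear L x y}"

definition setperp :: "'a set \<Rightarrow> 'a set set \<Rightarrow> 'a set \<Rightarrow> 'a set" where
  "setperp P L A = {y \<in> P. \<forall>a\<in>A. y \<in> perp P L a}"

definition gq22 :: "'a set \<Rightarrow> 'a set set \<Rightarrow> bool" where
  "gq22 P L \<longleftrightarrow>
     (\<forall>l\<in>L. l \<subseteq> P \<and> card l = 3) \<and>
     (\<forall>x\<in>P. card {l\<in>L. x \<in> l} = 3) \<and>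
     (\<forall>x\<in>P. \<forall>l\<in>L. x \<notin> l \<longrightarrow> (\<exists>!y. y \<in> l \<and> collinear L x y))"

definition triad :: "'a set \<Rightarrow> 'a set set \<Rightarrow> 'a set \<Rightarrow> bool" where
  "triad P L T \<longleftrightarrow> T \<subseteq> P \<and> card T = 3 \<and>
     (\<forall>a\<in>T. \<forall>b\<in>T. a \<noteq> b \<longrightarrow> \<not> collinear L a b)"

definition complete_triad :: "'a set \<Rightarrow> 'a set set \<Rightarrow> 'a set \<Rightarrow> bool" where
  "complete_triad P L T \<longleftrightarrow> triad P L T \<and> card (setperp P L T) = 3"

definition geom_iso :: "'a set \<Rightarrow> 'a set set \<Rightarrow> 'b set \<Rightarrow> 'b set set \<Rightarrow> ('a \<Rightarrow> 'b) \<Rightarrow> bool" where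
  "geom_iso P L P' L' f \<longleftrightarrow> bij_betw f P P' \<and>
     (\<forall>l. l \<subseteq> P \<longrightarrow> (l \<in> L \<longleftrightarrow> f ` l \<in> L'))"

definition calP :: "'a set \<Rightarrow> 'b set \<Rightarrow> 'b set set \<Rightarrow> ('a \<Rightarrow> 'b) \<Rightarrow> ('a \<times> 'b) set" where
  "calP P P' L' f = {(x, y). x \<in> P \<and> y \<in> perp P' L' (f x)}"

definition calL :: "'a set \<Rightarrow> 'a set set \<Rightarrow> 'b set \<Rightarrow> 'b set set \<Rightarrow> ('a \<Rightarrow> 'b)
    \<Rightarrow> ('a \<times> 'b) set set" where
  "calL P L P' L' f =
    {{(x, u), (y, v), (z, w)} | x y z u v w.
       distinct [x, y, z] \<and>
       ({x, y, z} \<in> L \<or> complete_triad P L {x, y, z}) \<and>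
       distinct [u, v, w] \<and>
       {u, v, w} = setperp P' L' (f ` {x, y, z}) \<and>
       {(x, u), (y, v), (z, w)} \<subseteq> calP P P' L' f}"

end

theory Submission
  imports Defs
begin

(* If T is a line or a complete triad of S and B = T'^perp, then B has three points, the nine
   points of T x B are points of the geometry and its six transversals are lines. Two points of T x B sharing
   exactly one coordinate are therefore both collinear with the two points of T x B that differ from
   each of them in both coordinates. Such a T exists: for x = y take T' = {u', v'}^perp, for u' = v'
   take T' = {x', y'}^perp^perp. Both are lines or complete triads because every pair of
   non-collinear points of a GQ(2,2) is regular, i.e. {a, b}^perp^perp has three points. *)

definition line_or_complete_triad :: "'a set \<Rightarrow> 'a set set \<Rightarrow> 'a set \<Rightarrow> bool" where
  "line_or_complete_triad P L T \<longleftrightarrow> T \<in> L \<or> complete_triad P L T"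

lemma collinearI: "l \<in> L \<Longrightarrow> a \<in> l \<Longrightarrow> b \<in> l \<Longrightarrow> collinear L a b"
  unfolding collinear_def by blast

lemma collinear_commute: "collinear L a b \<longleftrightarrow> collinear L b a"
  unfolding collinear_def by blast

lemma setperp_subset: "setperp P L A \<subseteq> P"
  unfolding setperp_def by blast

lemma setperp_antimono: "A \<subseteq> B \<Longrightarrow> setperp P L B \<subseteq> setperp P L A"
  unfolding setperp_def by blast

lemma perp_commute: "a \<in> P \<Longrightarrow> b \<in> P \<Longrightarrow> b \<in> perp P L a \<longleftrightarrow> a \<in> perp P L b"
  unfolding perp_def by (auto simp: collinear_commute)

lemma subset_setperp_setperp:
  assumes "A \<subseteq> P"
  shows "A \<subseteq> setperp P L (setperp P L A)"
proof
  fix x assume x: "x \<in> A"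
  have "x \<in> perp P L y" if "y \<in> setperp P L A" for y
    using that x assms perp_commute[of y P x L] unfolding setperp_def by blast
  then show "x \<in> setperp P L (setperp P L A)"
    using x assms unfolding setperp_def[of P L "setperp P L A"] by blast
qed

lemma setperp_setperp_setperp:
  assumes "A \<subseteq> P"
  shows "setperp P L (setperp P L (setperp P L A)) = setperp P L A"
proof
  show "setperp P L (setperp P L (setperp P L A)) \<subseteq> setperp P L A"
    using setperp_antimono subset_setperp_setperp[OF assms] .
  show "setperp P L A \<subseteq> setperp P L (setperp P L (setperp P L A))"
    using subset_setperp_setperp setperp_subset .
qed

lemma card_3_obtain_third:
  assumes "card A = 3" "a \<in> A" "b \<in> A" "a \<noteq> b"
  obtains c where "A = {a, b, c}" "distinct [a, b, c]"
proof -
  have "card (A - {a, b}) = 1" using assms by (simp add: card_Diff_subset)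
  then obtain c where "A - {a, b} = {c}" by (rule card_1_singletonE)
  then have "A = {a, b, c}" "distinct [a, b, c]" using assms(2-4) by auto
  then show thesis by (rule that)
qed

lemma card_3_obtain_other_two:
  assumes "card A = 3" "a \<in> A"
  obtains b c where "A = {a, b, c}" "distinct [a, b, c]"
proof -
  have "card (A - {a}) = 2" using assms by simp
  then obtain b c where "A - {a} = {b, c}" "b \<noteq> c" by (auto simp: card_2_iff)
  then have "A = {a, b, c}" "distinct [a, b, c]" using assms(2) by auto
  then show thesis by (rule that)
qed

lemma mem_calP_if_mem_setperp:
  "T \<subseteq> P \<Longrightarrow> a \<in> T \<Longrightarrow> b \<in> setperp P' L' (f ` T) \<Longrightarrow> (a, b) \<in> calP P P' L' f"
  unfolding calP_def setperp_def by blast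

lemma collinear_calL_transversal:
  assumes T: "T \<subseteq> P" "card T = 3" "line_or_complete_triad P L T"
    and B: "card (setperp P' L' (f ` T)) = 3"
    and a: "a \<in> T" "a' \<in> T" "a \<noteq> a'"
    and b: "b \<in> setperp P' L' (f ` T)" "b' \<in> setperp P' L' (f ` T)" "b \<noteq> b'"
  shows "collinear (calL P L P' L' f) (a, b) (a', b')"
proof -
  obtain a'' where a'': "T = {a, a', a''}" "distinct [a, a', a'']"
    using card_3_obtain_third[OF T(2) a] .
  obtain b'' where b'': "setperp P' L' (f ` T) = {b, b', b''}" "distinct [b, b', b'']"
    using card_3_obtain_third[OF B b] .
  have "b'' \<in> setperp P' L' (f ` T)" using b'' by auto
  then have "{(a, b), (a', b'), (a'', b'')} \<subseteq> calP P P' L' f"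
    using mem_calP_if_mem_setperp[OF T(1), where P' = P' and L' = L' and f = f] a a'' b by auto
  then have "{(a, b), (a', b'), (a'', b'')} \<in> calL P L P' L' f"
    using T(3) a'' b'' unfolding calL_def line_or_complete_triad_def
    by (intro CollectI exI[of _ a] exI[of _ a'] exI[of _ a''] exI[of _ b] exI[of _ b'] exI[of _ b'']) simp
  then show ?thesis by (rule collinearI) auto
qed

lemma common_neighbours_in_grid:
  assumes T: "T \<subseteq> P" "card T = 3" "line_or_complete_triad P L T"
    and B: "card (setperp P' L' (f ` T)) = 3"
    and xy: "x \<in> T" "y \<in> T" and uv: "u \<in> setperp P' L' (f ` T)" "v \<in> setperp P' L' (f ` T)"
    and shared: "(x = y \<and> u \<noteq> v) \<or> (x \<noteq> y \<and> u = v)"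
  obtains g h where "g \<noteq> h"
    "{g, h} \<subseteq> setperp (calP P P' L' f) (calL P L P' L' f) {(x, u), (y, v)}"
proof -
  let ?B = "setperp P' L' (f ` T)"
  have common: "(a, b) \<in> setperp (calP P P' L' f) (calL P L P' L' f) {(x, u), (y, v)}"
    if "a \<in> T" "b \<in> ?B" "a \<noteq> x" "a \<noteq> y" "b \<noteq> u" "b \<noteq> v" for a b
  proof -
    have "collinear (calL P L P' L' f) (x, u) (a, b)" "collinear (calL P L P' L' f) (y, v) (a, b)"
      using collinear_calL_transversal[OF T B] that xy uv by metis+
    then show ?thesis
      using mem_calP_if_mem_setperp[OF T(1) \<open>a \<in> T\<close> \<open>b \<in> ?B\<close>] unfolding setperp_def perp_def by blast
  qed
  show thesis
  proof (cases "x = y")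
    case True
    then have "u \<noteq> v" using shared by blast
    obtain z t where "T = {x, z, t}" "distinct [x, z, t]"
      using card_3_obtain_other_two[OF T(2) xy(1)] .
    moreover obtain r where "?B = {u, v, r}" "distinct [u, v, r]"
      using card_3_obtain_third[OF B uv \<open>u \<noteq> v\<close>] .
    ultimately show thesis using that[of "(z, r)" "(t, r)"] common True by auto
  next
    case False
    then have "u = v" using shared by blast
    obtain t where "T = {x, y, t}" "distinct [x, y, t]"
      using card_3_obtain_third[OF T(2) xy False] .
    moreover obtain p q where "?B = {u, p, q}" "distinct [u, p, q]"
      using card_3_obtain_other_two[OF B uv(1)] .
    ultimately show thesis using that[of "(t, p)" "(t, q)"] common \<open>u = v\<close> by auto
  qed
qed

locale gq22_geometry =
  fixes P :: "'a set" and L :: "'a set set"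
  assumes gq22: "gq22 P L"
begin

lemma line_subset: "l \<in> L \<Longrightarrow> l \<subseteq> P"
  and card_line: "l \<in> L \<Longrightarrow> card l = 3"
  and card_lines_through: "x \<in> P \<Longrightarrow> card {l \<in> L. x \<in> l} = 3"
  and ex1_collinear_on_line: "x \<in> P \<Longrightarrow> l \<in> L \<Longrightarrow> x \<notin> l \<Longrightarrow> \<exists>!y. y \<in> l \<and> collinear L x y"
  using gq22 unfolding gq22_def by auto

lemma collinear_in_points: "collinear L a b \<Longrightarrow> a \<in> P \<and> b \<in> P"
  unfolding collinear_def using line_subset by blast

lemma collinear_refl:
  assumes "a \<in> P"
  shows "collinear L a a"
proof -
  have "{l \<in> L. a \<in> l} \<noteq> {}"
    using card_lines_through[OF assms] by (metis card.empty zero_neq_numeral)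
  then show ?thesis unfolding collinear_def by blast
qed

lemma mem_perp_iff_collinear: "a \<in> P \<Longrightarrow> b \<in> perp P L a \<longleftrightarrow> collinear L a b"
  unfolding perp_def using collinear_refl collinear_in_points by blast

lemma mem_setperp_iff_collinear:
  "A \<subseteq> P \<Longrightarrow> b \<in> setperp P L A \<longleftrightarrow> b \<in> P \<and> (\<forall>a\<in>A. collinear L a b)"
  unfolding setperp_def using mem_perp_iff_collinear by blast

lemma collinear_on_line_unique:
  "\<lbrakk>l \<in> L; x \<notin> l; y \<in> l; collinear L x y; y' \<in> l; collinear L x y'\<rbrakk> \<Longrightarrow> y = y'"
  using ex1_collinear_on_line collinear_in_points by metis

lemma mem_line_if_collinear_two:
  "\<lbrakk>l \<in> L; a \<in> l; b \<in> l; a \<noteq> b; collinear L c a; collinear L c b\<rbrakk> \<Longrightarrow> c \<in> l"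
  using collinear_on_line_unique by blast

lemma line_unique:
  assumes l: "l \<in> L" "a \<in> l" "b \<in> l" and m: "m \<in> L" "a \<in> m" "b \<in> m" and "a \<noteq> b"
  shows "l = m"
proof (rule ccontr)
  assume "l \<noteq> m"
  have "finite l" using card_line[OF l(1)] by (metis card.infinite zero_neq_numeral)
  then have "\<not> m \<subseteq> l"
    using \<open>l \<noteq> m\<close> card_subset_eq card_line[OF l(1)] card_line[OF m(1)] by metis
  then obtain z where z: "z \<in> m" "z \<notin> l" by blast
  have "collinear L z a" "collinear L z b" using collinearI[OF m(1) z(1)] m by blast+
  then show False using mem_line_if_collinear_two[OF l \<open>a \<noteq> b\<close>] z(2) by blast
qed


lemma setperp_collinear_pair:
  assumes l: "l \<in> L" "a \<in> l" "b \<in> l" "a \<noteq> b"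
  shows "setperp P L {a, b} = l"
proof -
  have "a \<in> P" "b \<in> P" using l line_subset by auto
  then show ?thesis
    using l line_subset[OF l(1)] collinearI[OF l(1)] mem_line_if_collinear_two[OF l]
    by (auto simp: mem_setperp_iff_collinear collinear_commute)
qed

lemma setperp_line:
  assumes l: "l \<in> L"
  shows "setperp P L l = l"
proof -
  obtain a b where ab: "a \<in> l" "b \<in> l" "a \<noteq> b"
    using card_line[OF l] by (metis card_3_iff insertI1 insertI2)
  have "setperp P L l \<subseteq> l"
    using setperp_antimono[of "{a, b}" l] ab setperp_collinear_pair[OF l ab] by blast
  moreover have "l \<subseteq> setperp P L l"
    using line_subset[OF l] collinearI[OF l] by (auto simp: mem_setperp_iff_collinear)
  ultimately show ?thesis by blast
qed

lemma triad_setperp_noncollinear_pair: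
  assumes a: "a \<in> P" and b: "b \<in> P" and ab: "\<not> collinear L a b"
  shows "triad P L (setperp P L {a, b})"
proof -
  define La where "La = {l \<in> L. a \<in> l}"
  define proj where "proj l = (THE y. y \<in> l \<and> collinear L b y)" for l
  have b_off: "b \<notin> l" if "l \<in> La" for l
    using that ab collinearI[of l L a b] unfolding La_def by blast
  have proj: "proj l \<in> l" "collinear L b (proj l)" if "l \<in> La" for l
  proof -
    have "\<exists>!y. y \<in> l \<and> collinear L b y"
      using that b_off[OF that] b ex1_collinear_on_line unfolding La_def by blast
    then have "proj l \<in> l \<and> collinear L b (proj l)"
      unfolding proj_def by (rule theI')
    then show "proj l \<in> l" "collinear L b (proj l)" by auto
  qed
  have image: "setperp P L {a, b} = proj ` La"
  proof
    show "proj ` La \<subseteq> setperp P L {a, b}"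
    proof
      fix d assume "d \<in> proj ` La"
      then obtain l where l: "l \<in> La" "d = proj l" by blast
      then have "l \<in> L" "a \<in> l" "d \<in> l" using proj(1) unfolding La_def by auto
      then have "d \<in> P" "collinear L a d" using line_subset collinearI[of l L a d] by blast+
      moreover have "collinear L b d" using proj(2) l by blast
      ultimately show "d \<in> setperp P L {a, b}" using a b by (simp add: mem_setperp_iff_collinear)
    qed
    show "setperp P L {a, b} \<subseteq> proj ` La"
    proof
      fix d assume "d \<in> setperp P L {a, b}"
      then have "collinear L a d" "collinear L b d" using a b by (auto simp: mem_setperp_iff_collinear)
      then obtain l where l: "l \<in> La" "d \<in> l" unfolding collinear_def La_def by blast
      have "d = proj l"
        using collinear_on_line_unique[of l b d "proj l"] l proj[OF l(1)] b_off[OF l(1)]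
          \<open>collinear L b d\<close> unfolding La_def by blast
      then show "d \<in> proj ` La" using l by blast
    qed
  qed
  have "inj_on proj La"
  proof
    fix l m assume l: "l \<in> La" and m: "m \<in> La" and eq: "proj l = proj m"
    have "proj l \<noteq> a" using proj(2)[OF l] ab collinear_commute by metis
    then show "l = m"
      using line_unique[of l a "proj l" m] l m proj(1)[OF l] proj(1)[OF m] eq
      unfolding La_def by auto
  qed
  then have "card (setperp P L {a, b}) = 3"
    using image card_image card_lines_through[OF a] unfolding La_def by metis
  moreover have "\<not> collinear L p q"
    if "p \<in> setperp P L {a, b}" "q \<in> setperp P L {a, b}" "p \<noteq> q" for p q
  proof
    assume "collinear L p q"
    then obtain l where l: "l \<in> L" "p \<in> l" "q \<in> l" unfolding collinear_def by blast
    have "a \<in> l" "b \<in> l"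
      using that a b mem_line_if_collinear_two[OF l that(3)] by (auto simp: mem_setperp_iff_collinear)
    then show False using ab collinearI[OF l(1)] by blast
  qed
  ultimately show ?thesis unfolding triad_def using setperp_subset[of P L "{a, b}"] by blast
qed


lemma collinear_of_fourth_neighbour:
  assumes r: "r \<in> P"
    and coll: "collinear L r a" "collinear L r b" "collinear L r e" "collinear L r e'"
    and noncoll: "\<not> collinear L a b" "\<not> collinear L a e" "\<not> collinear L b e"
      "\<not> collinear L a e'" "\<not> collinear L b e'"
  shows "collinear L e e'"
proof -
  obtain la lb le le' where lines: "la \<in> L" "lb \<in> L" "le \<in> L" "le' \<in> L"
    and through: "r \<in> la" "r \<in> lb" "r \<in> le" "r \<in> le'"
    and on: "a \<in> la" "b \<in> lb" "e \<in> le" "e' \<in> le'"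
    using coll unfolding collinear_def by metis
  have distinct: "la \<noteq> lb" "la \<noteq> le" "lb \<noteq> le" "le' \<noteq> la" "le' \<noteq> lb"
    using noncoll lines on collinearI by metis+
  have "{la, lb, le} \<subseteq> {l \<in> L. r \<in> l}" using lines through by blast
  moreover have "card {la, lb, le} = 3" using distinct by simp
  ultimately have "{la, lb, le} = {l \<in> L. r \<in> l}"
    using card_lines_through[OF r] by (metis card_subset_eq card.infinite zero_neq_numeral)
  then have "le' = le" using lines(4) through(4) distinct(4,5) by blast
  then show ?thesis using collinearI lines(3) on(3,4) by metis
qed

(* Regularity: a point r collinear with two points a, b of the triad {p, q}^perp is collinear with
   its third point c. Otherwise a, b and the projections of r onto the lines pc and qc would give
   four lines through r. *)
lemma collinear_third_point_of_pair_perp: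
  assumes pqr: "p \<in> P" "q \<in> P" "r \<in> P"
    and triad: "\<not> collinear L p q" "\<not> collinear L p r" "\<not> collinear L q r"
    and ab: "a \<in> setperp P L {p, q, r}" "b \<in> setperp P L {p, q, r}"
    and c: "c \<in> setperp P L {p, q}"
    and noncoll: "\<not> collinear L a b" "\<not> collinear L a c" "\<not> collinear L b c"
  shows "collinear L r c"
proof (rule ccontr)
  assume rc: "\<not> collinear L r c"
  have coll_abc: "collinear L p w" "collinear L q w" if "w \<in> {a, b, c}" for w
    using that ab c pqr by (auto simp: mem_setperp_iff_collinear)
  have coll_r: "collinear L r a" "collinear L r b"
    using ab pqr by (auto simp: mem_setperp_iff_collinear)
  obtain lp where lp: "lp \<in> L" "p \<in> lp" "c \<in> lp" using coll_abc[of c] unfolding collinear_def by blast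
  obtain lq where lq: "lq \<in> L" "q \<in> lq" "c \<in> lq" using coll_abc[of c] unfolding collinear_def by blast
  obtain e where e: "e \<in> lp" "collinear L r e"
    using ex1_collinear_on_line[OF pqr(3) lp(1)] triad(2) collinearI[OF lp(1) lp(2)] by blast
  obtain e' where e': "e' \<in> lq" "collinear L r e'"
    using ex1_collinear_on_line[OF pqr(3) lq(1)] triad(3) collinearI[OF lq(1) lq(2)] by blast
  have "p \<noteq> e" "q \<noteq> e'" using e e' triad(2,3) collinear_commute by metis+
  have off: "\<not> collinear L w e" "\<not> collinear L w e'" if "w \<in> {a, b}" for w
  proof -
    have wc: "\<not> collinear L w c" using that noncoll by blast
    have "collinear L w p" "collinear L w q"
      using coll_abc[of w] that collinear_commute[of L p w] collinear_commute[of L q w] by auto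
    show "\<not> collinear L w e"
    proof
      assume "collinear L w e"
      then have "w \<in> lp"
        using mem_line_if_collinear_two[OF lp(1,2) e(1) \<open>p \<noteq> e\<close> \<open>collinear L w p\<close>] by blast
      then show False using wc collinearI[OF lp(1) _ lp(3)] by blast
    qed
    show "\<not> collinear L w e'"
    proof
      assume "collinear L w e'"
      then have "w \<in> lq"
        using mem_line_if_collinear_two[OF lq(1,2) e'(1) \<open>q \<noteq> e'\<close> \<open>collinear L w q\<close>] by blast
      then show False using wc collinearI[OF lq(1) _ lq(3)] by blast
    qed
  qed
  have "collinear L e e'"
    using collinear_of_fourth_neighbour[OF pqr(3) coll_r e(2) e'(2)] noncoll(1) off by blast
  moreover have "c \<noteq> e" "c \<noteq> e'" using rc e e' by auto
  ultimately have "e' \<in> lp"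
    using mem_line_if_collinear_two[OF lp(1,3) e(1)] collinearI[OF lq(1) e'(1) lq(3)]
      collinear_commute by metis
  then have "lp = lq" using line_unique[OF lp(1,3) _ lq(1,3) e'(1)] \<open>c \<noteq> e'\<close> by blast
  then show False using triad(1) collinearI lp lq by metis
qed


lemma complete_triad_setperp_noncollinear_pair:
  assumes a: "a \<in> P" and b: "b \<in> P" and ab: "\<not> collinear L a b"
  shows "complete_triad P L (setperp P L {a, b})"
    and "complete_triad P L (setperp P L (setperp P L {a, b}))"
proof -
  let ?A = "setperp P L {a, b}"
  have A: "triad P L ?A" using triad_setperp_noncollinear_pair[OF a b ab] .
  then obtain p q r where pqr: "?A = {p, q, r}" "distinct [p, q, r]"
    unfolding triad_def by (metis card_3_iff distinct_length_2_or_more distinct_singleton)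
  have pqr_P: "p \<in> P" "q \<in> P" "r \<in> P" and
    pqr_nc: "\<not> collinear L p q" "\<not> collinear L p r" "\<not> collinear L q r"
    using A pqr unfolding triad_def by auto
  let ?B = "setperp P L {p, q}"
  have B: "triad P L ?B" using triad_setperp_noncollinear_pair[OF pqr_P(1,2) pqr_nc(1)] .
  have ab_A': "a \<in> setperp P L ?A" "b \<in> setperp P L ?A"
    using subset_setperp_setperp[of "{a, b}" P L] a b by auto
  then have "a \<in> ?B" "b \<in> ?B" using setperp_antimono[of "{p, q}" ?A] pqr(1) by auto
  moreover have "a \<noteq> b" using ab collinear_refl a by blast
  ultimately obtain c where c: "?B = {a, b, c}" "distinct [a, b, c]"
    using card_3_obtain_third B unfolding triad_def by metis
  have "\<not> collinear L a c" "\<not> collinear L b c" using B c unfolding triad_def by auto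
  then have "collinear L r c"
    using collinear_third_point_of_pair_perp[OF pqr_P pqr_nc] ab_A' pqr(1) c(1) ab by auto
  then have "c \<in> setperp P L ?A"
    using c(1) pqr(1) pqr_P by (auto simp: mem_setperp_iff_collinear)
  then have A': "setperp P L ?A = ?B"
    using setperp_antimono[of "{p, q}" ?A P L] pqr(1) ab_A' c(1) by auto
  have A'': "setperp P L (setperp P L ?A) = ?A"
    using setperp_setperp_setperp[of "{a, b}" P L] a b by simp
  show "complete_triad P L ?A" using A A' B unfolding complete_triad_def triad_def by simp
  show "complete_triad P L (setperp P L ?A)"
    using A A' A'' B unfolding complete_triad_def triad_def by simp
qed

lemma line_or_complete_triad_setperp_pair:
  assumes a: "a \<in> P" and b: "b \<in> P" and ab: "a \<noteq> b"
  shows "line_or_complete_triad P L (setperp P L {a, b})"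
    and "line_or_complete_triad P L (setperp P L (setperp P L {a, b}))"
proof -
  let ?A = "setperp P L {a, b}"
  have "line_or_complete_triad P L ?A \<and> line_or_complete_triad P L (setperp P L ?A)"
  proof (cases "collinear L a b")
    case True
    then obtain l where "l \<in> L" "a \<in> l" "b \<in> l" unfolding collinear_def by blast
    then show ?thesis
      using setperp_collinear_pair ab setperp_line unfolding line_or_complete_triad_def by metis
  next
    case False
    then show ?thesis
      using complete_triad_setperp_noncollinear_pair[OF a b] unfolding line_or_complete_triad_def
      by blast
  qed
  then show "line_or_complete_triad P L ?A" "line_or_complete_triad P L (setperp P L ?A)" by auto
qed

lemma card_line_or_complete_triad:
  assumes "line_or_complete_triad P L T"
  shows "card T = 3" and "card (setperp P L T) = 3"
  using assms card_line setperp_line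
  unfolding line_or_complete_triad_def complete_triad_def triad_def by auto

lemma line_or_complete_triad_subset:
  "line_or_complete_triad P L T \<Longrightarrow> T \<subseteq> P"
  using line_subset unfolding line_or_complete_triad_def complete_triad_def triad_def by blast


lemma obtain_line_or_complete_triad:
  assumes ab: "a \<in> P" "b \<in> P" and uv: "u \<in> perp P L a" "v \<in> perp P L b"
    and shared: "(a = b \<and> u \<noteq> v) \<or> (a \<noteq> b \<and> u = v)"
  obtains T where "line_or_complete_triad P L T" "a \<in> T" "b \<in> T"
    "u \<in> setperp P L T" "v \<in> setperp P L T"
proof (cases "a = b")
  case True
  have "u \<in> P" "v \<in> P" using uv ab collinear_in_points by (auto simp: mem_perp_iff_collinear)
  moreover have "a \<in> setperp P L {u, v}"
    using True ab uv calculation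
    by (auto simp: mem_setperp_iff_collinear mem_perp_iff_collinear collinear_commute)
  ultimately show thesis
    using that[of "setperp P L {u, v}"] line_or_complete_triad_setperp_pair(1) True shared
      subset_setperp_setperp[of "{u, v}" P L] by auto
next
  case False
  have "u \<in> P" using uv(1) ab(1) collinear_in_points mem_perp_iff_collinear by blast
  then have "u \<in> setperp P L {a, b}" using False shared uv by (auto simp: setperp_def)
  then show thesis
    using that[of "setperp P L (setperp P L {a, b})"] line_or_complete_triad_setperp_pair(2)[OF ab False]
      subset_setperp_setperp[of "{a, b}" P L] setperp_setperp_setperp[of "{a, b}" P L] ab False shared
    by auto
qed

lemma finite_perp:
  assumes "a \<in> P"
  shows "finite (perp P L a)"
proof -
  have "finite {l \<in> L. a \<in> l}" using card_lines_through[OF assms] by (metis card.infinite zero_neq_numeral)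
  moreover have "finite l" if "l \<in> L" for l using card_line[OF that] by (metis card.infinite zero_neq_numeral)
  ultimately have "finite (insert a (\<Union>{l \<in> L. a \<in> l}))" by auto
  moreover have "perp P L a \<subseteq> insert a (\<Union>{l \<in> L. a \<in> l})"
    unfolding perp_def collinear_def by blast
  ultimately show ?thesis by (rule finite_subset[rotated])
qed

(* Every point z is at distance at most two from x, through any point of {x, z}^perp. *)
lemma finite_points: "finite P"
proof (cases "P = {}")
  case False
  then obtain x where x: "x \<in> P" by blast
  have "P \<subseteq> (\<Union>n \<in> perp P L x. perp P L n)"
  proof
    fix z assume z: "z \<in> P"
    show "z \<in> (\<Union>n \<in> perp P L x. perp P L n)"
    proof (cases "z = x")
      case True
      then show ?thesis unfolding perp_def by blast
    next
      case False
      then have "card (setperp P L {x, z}) = 3"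
        using card_line_or_complete_triad(1) line_or_complete_triad_setperp_pair(1) x z by metis
      then obtain n where "n \<in> setperp P L {x, z}" by fastforce
      then show ?thesis using x z perp_commute[of z P n L] by (auto simp: setperp_def)
    qed
  qed
  moreover have "perp P L x \<subseteq> P" using x collinear_in_points by (auto simp: mem_perp_iff_collinear)
  ultimately show ?thesis
    using finite_perp x by (meson finite_UN_I finite_subset subsetD)
qed (simp)

end

locale gq22_isomorphism = S: gq22_geometry P L + S': gq22_geometry P' L'
  for P :: "'a set" and L and P' :: "'b set" and L' +
  fixes f :: "'a \<Rightarrow> 'b"
  assumes iso: "geom_iso P L P' L' f"
begin

lemma inj_on_points: "inj_on f P"
  and image_points: "f ` P = P'"
  and line_iff_image_line: "l \<subseteq> P \<Longrightarrow> f ` l \<in> L' \<longleftrightarrow> l \<in> L"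
  using iso unfolding geom_iso_def bij_betw_def by blast+

lemma collinear_iso:
  assumes a: "a \<in> P" and b: "b \<in> P"
  shows "collinear L' (f a) (f b) \<longleftrightarrow> collinear L a b"
proof
  assume "collinear L a b"
  then obtain l where "l \<in> L" "a \<in> l" "b \<in> l" unfolding collinear_def by blast
  then show "collinear L' (f a) (f b)"
    using line_iff_image_line[OF S.line_subset] collinearI[of "f ` l"] by blast
next
  assume "collinear L' (f a) (f b)"
  then obtain l' where l': "l' \<in> L'" "f a \<in> l'" "f b \<in> l'" unfolding collinear_def by blast
  define l where "l = {z \<in> P. f z \<in> l'}"
  have "f ` l = l'" using S'.line_subset[OF l'(1)] image_points unfolding l_def by blast
  moreover have "l \<subseteq> P" unfolding l_def by blast
  ultimately have "l \<in> L" using line_iff_image_line l'(1) by blast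
  moreover have "a \<in> l" "b \<in> l" using a b l' unfolding l_def by auto
  ultimately show "collinear L a b" by (rule collinearI)
qed

lemma setperp_iso:
  assumes T: "T \<subseteq> P"
  shows "setperp P' L' (f ` T) = f ` setperp P L T"
proof -
  have "b' \<in> setperp P' L' (f ` T) \<longleftrightarrow> (\<exists>b \<in> setperp P L T. b' = f b)" for b'
  proof -
    have "f ` T \<subseteq> P'" using T image_points by blast
    then have "b' \<in> setperp P' L' (f ` T) \<longleftrightarrow> (\<exists>b \<in> P. b' = f b \<and> (\<forall>a\<in>T. collinear L' (f a) (f b)))"
      using image_points by (auto simp: S'.mem_setperp_iff_collinear)
    also have "\<dots> \<longleftrightarrow> (\<exists>b \<in> P. b' = f b \<and> (\<forall>a\<in>T. collinear L a b))"
      using T collinear_iso by blast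
    also have "\<dots> \<longleftrightarrow> (\<exists>b \<in> setperp P L T. b' = f b)"
      using S.mem_setperp_iff_collinear[OF T] by blast
    finally show ?thesis .
  qed
  then show ?thesis by blast
qed

lemma line_or_complete_triad_iso:
  assumes T: "T \<subseteq> P"
  shows "line_or_complete_triad P' L' (f ` T) \<longleftrightarrow> line_or_complete_triad P L T"
proof -
  have inj: "inj_on f T" "inj_on f (setperp P L T)"
    using inj_on_subset[OF inj_on_points] T setperp_subset[of P L T] by auto
  have "collinear L' (f a) (f b) \<longleftrightarrow> collinear L a b" if "a \<in> T" "b \<in> T" for a b
    using T that collinear_iso by blast
  then have "(\<forall>a'\<in>f ` T. \<forall>b'\<in>f ` T. a' \<noteq> b' \<longrightarrow> \<not> collinear L' a' b') \<longleftrightarrow>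
      (\<forall>a\<in>T. \<forall>b\<in>T. a \<noteq> b \<longrightarrow> \<not> collinear L a b)"
    using inj_on_eq_iff[OF inj(1)] by auto
  moreover have "f ` T \<subseteq> P'" using T image_points by blast
  ultimately have "triad P' L' (f ` T) \<longleftrightarrow> triad P L T"
    using T card_image[OF inj(1)] unfolding triad_def by auto
  then have "complete_triad P' L' (f ` T) \<longleftrightarrow> complete_triad P L T"
    using setperp_iso[OF T] card_image[OF inj(2)] unfolding complete_triad_def by auto
  then show ?thesis
    using line_iff_image_line[OF T] unfolding line_or_complete_triad_def by blast
qed

lemma finite_calP: "finite (calP P P' L' f)"
proof -
  have "calP P P' L' f = Sigma P (\<lambda>x. perp P' L' (f x))" unfolding calP_def by auto
  then show ?thesis
    using S.finite_points S'.finite_perp image_points by (auto intro: finite_SigmaI)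
qed

lemma obtain_grid:
  assumes xy: "x \<in> P" "y \<in> P" and uv: "u \<in> perp P' L' (f x)" "v \<in> perp P' L' (f y)"
    and shared: "(x = y \<and> u \<noteq> v) \<or> (x \<noteq> y \<and> u = v)"
  obtains T where "T \<subseteq> P" "card T = 3" "line_or_complete_triad P L T"
    "card (setperp P' L' (f ` T)) = 3" "x \<in> T" "y \<in> T"
    "u \<in> setperp P' L' (f ` T)" "v \<in> setperp P' L' (f ` T)"
proof -
  have "(f x = f y \<and> u \<noteq> v) \<or> (f x \<noteq> f y \<and> u = v)"
    using shared inj_on_points xy by (auto dest: inj_onD)
  then obtain T' where T': "line_or_complete_triad P' L' T'" "f x \<in> T'" "f y \<in> T'"
    "u \<in> setperp P' L' T'" "v \<in> setperp P' L' T'"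
    using S'.obtain_line_or_complete_triad xy image_points uv by blast
  define T where "T = {z \<in> P. f z \<in> T'}"
  have "T \<subseteq> P" and fT: "f ` T = T'"
    using S'.line_or_complete_triad_subset[OF T'(1)] image_points unfolding T_def by auto
  moreover have "line_or_complete_triad P L T"
    using T'(1) line_or_complete_triad_iso \<open>T \<subseteq> P\<close> fT by blast
  moreover have "x \<in> T" "y \<in> T" using xy T' unfolding T_def by auto
  ultimately show thesis
    using that S.card_line_or_complete_triad(1) S'.card_line_or_complete_triad(2)[OF T'(1)] T'(4,5)
    by simp
qed

end

theorem lemma3p1:
  fixes P :: "'a set" and L :: "'a set set"
    and P' :: "'b set" and L' :: "'b set set" and f :: "'a \<Rightarrow> 'b"
    and x y :: 'a and u v :: 'b
  assumes "gq22 P L" and "gq22 P' L'" and "geom_iso P L P' L' f"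
    and "(x, u) \<in> calP P P' L' f" and "(y, v) \<in> calP P P' L' f"
    and "(x, u) \<noteq> (y, v)"
    and "\<not> collinear (calL P L P' L' f) (x, u) (y, v)"
    and "(x = y \<and> u \<noteq> v) \<or> (x \<noteq> y \<and> u = v)"
  shows "card (setperp (calP P P' L' f) (calL P L P' L' f) {(x, u), (y, v)}) \<ge> 2"
proof -
  interpret gq22_isomorphism P L P' L' f
    using assms(1-3) by (simp add: gq22_isomorphism_def gq22_isomorphism_axioms_def gq22_geometry_def)
  have "x \<in> P" "y \<in> P" "u \<in> perp P' L' (f x)" "v \<in> perp P' L' (f y)"
    using assms(4,5) unfolding calP_def by auto
  then obtain T where "T \<subseteq> P" "card T = 3" "line_or_complete_triad P L T"
    "card (setperp P' L' (f ` T)) = 3" "x \<in> T" "y \<in> T"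
    "u \<in> setperp P' L' (f ` T)" "v \<in> setperp P' L' (f ` T)"
    using obtain_grid assms(8) by metis
  then obtain g h where "g \<noteq> h"
    and gh: "{g, h} \<subseteq> setperp (calP P P' L' f) (calL P L P' L' f) {(x, u), (y, v)}"
    using common_neighbours_in_grid assms(8) by metis
  have "finite (setperp (calP P P' L' f) (calL P L P' L' f) {(x, u), (y, v)})"
    using finite_calP setperp_subset finite_subset by metis
  then show ?thesis using card_mono[OF _ gh] \<open>g \<noteq> h\<close> by fastforce
qed

end
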